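(* Let $k,r,h$ be positive integers with $r\mid(k+h)$ and $h\ge 2$. If $C$ is a maximally recoverable local $(k,r,h)$-code defined over the finite field $\mathbb{F}_q$, then $q\ge k+1$.
   Context: A local $(k,r,h)$-code over $\mathbb{F}_q$ (with $r\mid(k+h)$) is a linear systematic code of dimension $k$ and length $k+h+\frac{k+h}{r}$ consisting of $k$ data symbols, $h$ heavy parity symbols (each a fixed $\mathbb{F}_q$-linear combination of all data symbols), and, after partitioning the $k+h$ data and heavy parity symbols into $\frac{k+h}{r}$ groups of size $r$, one local parity per group equal to the sum of the group's symbols. A local group is such a group together with its local parity. The code is maximally recoverable if for every set $E$ of coordinates containing exactly one coordinate from each local group, puncturing the code in $E$ (deleting those coordinates) yields a maximum distance separable $[k+h,k]$ code (minimum distance $h+1$). *)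

theory Defs
  imports "HOL-Analysis.Analysis"
begin

text \<open>Coordinates of a local (k,r,h)-code: 0..k-1 data symbols, k..k+h-1 heavy parities,
  k+h+t (t < (k+h) div r) the local parity of group t.\<close>

definition n_groups :: "nat \<Rightarrow> nat \<Rightarrow> nat \<Rightarrow> nat" where
  "n_groups k r h = (k + h) div r"

definition code_coords :: "nat \<Rightarrow> nat \<Rightarrow> nat \<Rightarrow> nat set" where
  "code_coords k r h = {..< k + h + n_groups k r h}"

definition valid_grouping :: "nat \<Rightarrow> nat \<Rightarrow> nat \<Rightarrow> (nat \<Rightarrow> nat) \<Rightarrow> bool" where
  "valid_grouping k r h g \<longleftrightarrow>
     (\<forall>i < k + h. g i < n_groups k r h) \<and>
     (\<forall>t < n_groups k r h. card {i. i < k + h \<and> g i = t} = r)"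

definition messages :: "nat \<Rightarrow> (nat \<Rightarrow> 'a::zero) set" where
  "messages k = {x. \<forall>i\<ge>k. x i = 0}"

definition sym_val :: "nat \<Rightarrow> (nat \<Rightarrow> nat \<Rightarrow> 'a::field) \<Rightarrow> (nat \<Rightarrow> 'a) \<Rightarrow> nat \<Rightarrow> 'a" where
  "sym_val k H x c = (if c < k then x c else (\<Sum>i<k. H (c - k) i * x i))"

definition codeword :: "nat \<Rightarrow> nat \<Rightarrow> (nat \<Rightarrow> nat \<Rightarrow> 'a::field) \<Rightarrow> (nat \<Rightarrow> nat)
    \<Rightarrow> (nat \<Rightarrow> 'a) \<Rightarrow> nat \<Rightarrow> 'a" where
  "codeword k h H g x c =
     (if c < k + h then sym_val k H x c
      else (\<Sum>j\<in>{j. j < k + h \<and> g j = c - (k + h)}. sym_val k H x j))"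

definition local_group :: "nat \<Rightarrow> nat \<Rightarrow> (nat \<Rightarrow> nat) \<Rightarrow> nat \<Rightarrow> nat set" where
  "local_group k h g t = {i. i < k + h \<and> g i = t} \<union> {k + h + t}"

definition admissible_erasure :: "nat \<Rightarrow> nat \<Rightarrow> nat \<Rightarrow> (nat \<Rightarrow> nat) \<Rightarrow> nat set \<Rightarrow> bool" where
  "admissible_erasure k r h g E \<longleftrightarrow>
     E \<subseteq> code_coords k r h \<and>
     (\<forall>t < n_groups k r h. card (E \<inter> local_group k h g t) = 1)"

text \<open>Code punctured in E: codewords restricted to the coordinates outside E
  (represented as functions vanishing outside those coordinates).\<close>
definition punctured_code :: "nat \<Rightarrow> nat \<Rightarrow> nat \<Rightarrow> (nat \<Rightarrow> nat \<Rightarrow> 'a::field) \<Rightarrow> (nat \<Rightarrow> nat)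
    \<Rightarrow> nat set \<Rightarrow> (nat \<Rightarrow> 'a) set" where
  "punctured_code k r h H g E =
     (\<lambda>x c. if c \<in> code_coords k r h - E then codeword k h H g x c else 0) ` messages k"

definition hamming_weight :: "(nat \<Rightarrow> 'a::zero) \<Rightarrow> nat" where
  "hamming_weight w = card {c. w c \<noteq> 0}"

definition is_MDS_code :: "nat \<Rightarrow> nat \<Rightarrow> (nat \<Rightarrow> 'a::{finite,field}) set \<Rightarrow> bool" where
  "is_MDS_code k d C \<longleftrightarrow> card C = CARD('a) ^ k \<and> Min (hamming_weight ` (C - {\<lambda>_. 0})) = d"

definition maximally_recoverable :: "nat \<Rightarrow> nat \<Rightarrow> nat \<Rightarrow> (nat \<Rightarrow> nat \<Rightarrow> 'a::{finite,field})
    \<Rightarrow> (nat \<Rightarrow> nat) \<Rightarrow> bool" where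
  "maximally_recoverable k r h H g \<longleftrightarrow>
     (\<forall>E. admissible_erasure k r h g E \<longrightarrow> is_MDS_code k (h + 1) (punctured_code k r h H g E))"

end

theory Submission
  imports Defs
begin

text \<open>Erasing every local parity is admissible for any grouping, and what remains is the
  systematic code with parity matrix H.  If it has distance h + 1, a nonzero message supported
  on S can satisfy fewer than |S| of the heavy parity checks; hence every entry and every
  2 x 2 minor of H is nonzero.  The ratios of the first two rows of H are then k pairwise
  distinct nonzero field elements.\<close>

definition systematic_word :: "nat \<Rightarrow> nat \<Rightarrow> (nat \<Rightarrow> nat \<Rightarrow> 'a::field) \<Rightarrow> (nat \<Rightarrow> 'a) \<Rightarrow> nat \<Rightarrow> 'a"
  where "systematic_word k h H x c = (if c < k + h then sym_val k H x c else 0)"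

lemma admissible_erasure_local_parities:
  "admissible_erasure k r h g {k + h..<k + h + n_groups k r h}"
proof -
  have "{k + h..<k + h + n_groups k r h} \<inter> local_group k h g t = {k + h + t}"
    if "t < n_groups k r h" for t
    using that unfolding local_group_def by auto
  then show ?thesis
    unfolding admissible_erasure_def code_coords_def by auto
qed

lemma punctured_code_local_parities:
  "punctured_code k r h H g {k + h..<k + h + n_groups k r h} = systematic_word k h H ` messages k"
proof -
  have "(\<lambda>c. if c \<in> code_coords k r h - {k + h..<k + h + n_groups k r h}
              then codeword k h H g x c else 0) = systematic_word k h H x" for x
    by (auto simp: code_coords_def codeword_def systematic_word_def)
  then show ?thesis
    unfolding punctured_code_def by simp
qed

lemma MDS_code_weight_ge:
  assumes "is_MDS_code k d C" and "w \<in> C" and "w \<noteq> (\<lambda>_. 0)"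
  shows "d \<le> hamming_weight w"
proof -
  have "card C > 0"
    using assms(1) unfolding is_MDS_code_def by simp
  then have "finite C"
    using card_ge_0_finite by blast
  then have "Min (hamming_weight ` (C - {\<lambda>_. 0})) \<le> hamming_weight w"
    using assms(2,3) by (intro Min_le) auto
  then show ?thesis
    using assms(1) unfolding is_MDS_code_def by simp
qed

lemma maximally_recoverable_systematic_weight_ge:
  assumes "maximally_recoverable k r h H g" and "x \<in> messages k" and "\<exists>i<k. x i \<noteq> 0"
  shows "h + 1 \<le> hamming_weight (systematic_word k h H x)"
proof (rule MDS_code_weight_ge)
  show "is_MDS_code k (h + 1) (systematic_word k h H ` messages k)"
    using assms(1) admissible_erasure_local_parities punctured_code_local_parities
    unfolding maximally_recoverable_def by metis
  show "systematic_word k h H x \<in> systematic_word k h H ` messages k"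
    using assms(2) by simp
  obtain i where "i < k" "x i \<noteq> 0"
    using assms(3) by blast
  then have "systematic_word k h H x i \<noteq> 0"
    by (simp add: systematic_word_def sym_val_def)
  then show "systematic_word k h H x \<noteq> (\<lambda>_. 0)"
    by metis
qed

lemma systematic_word_support:
  assumes "\<forall>i<k. x i \<noteq> 0 \<longrightarrow> i \<in> S" and "\<forall>j\<in>J. (\<Sum>i<k. H j i * x i) = 0"
  shows "{c. systematic_word k h H x c \<noteq> 0} \<subseteq> S \<union> (+) k ` ({..<h} - J)"
proof
  fix c
  assume "c \<in> {c. systematic_word k h H x c \<noteq> 0}"
  then have c: "c < k + h" "sym_val k H x c \<noteq> 0"
    by (simp_all add: systematic_word_def split: if_splits)
  show "c \<in> S \<union> (+) k ` ({..<h} - J)"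
  proof (cases "c < k")
    case True
    then show ?thesis
      using c assms(1) by (simp add: sym_val_def)
  next
    case False
    then have "c - k \<in> {..<h} - J" and "c = k + (c - k)"
      using c assms(2) by (auto simp: sym_val_def)
    then show ?thesis
      by blast
  qed
qed

lemma heavy_checks_less_support:
  assumes distance: "\<And>x. x \<in> messages k \<Longrightarrow> \<exists>i<k. x i \<noteq> 0
      \<Longrightarrow> h + 1 \<le> hamming_weight (systematic_word k h H x)"
    and x: "x \<in> messages k" "\<exists>i<k. x i \<noteq> 0"
    and S: "S \<subseteq> {..<k}" "\<forall>i<k. x i \<noteq> 0 \<longrightarrow> i \<in> S"
    and J: "J \<subseteq> {..<h}" "\<forall>j\<in>J. (\<Sum>i<k. H j i * x i) = 0"
  shows "card J < card S"
proof -
  have "finite S"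
    using S(1) finite_subset by blast
  have "h + 1 \<le> hamming_weight (systematic_word k h H x)"
    using distance x by blast
  also have "\<dots> \<le> card (S \<union> (+) k ` ({..<h} - J))"
    unfolding hamming_weight_def
    using systematic_word_support[OF S(2) J(2)] \<open>finite S\<close> by (intro card_mono) auto
  also have "\<dots> \<le> card S + card ({..<h} - J)"
    using card_Un_le card_image_le[of "{..<h} - J" "(+) k"] by (metis add_left_mono finite_Diff
        finite_lessThan order_trans)
  also have "card ({..<h} - J) = h - card J"
    using J(1) by (simp add: card_Diff_subset finite_subset)
  finally show ?thesis
    using J(1) card_mono[of "{..<h}" J] by simp
qed

lemma sum_two_points:
  fixes f :: "nat \<Rightarrow> 'a::comm_ring_1"
  assumes "i < k" "l < k" "i \<noteq> l"
  shows "(\<Sum>m<k. f m * (if m = i then u else if m = l then v else 0)) = f i * u + f l * v"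
proof -
  have "f m * (if m = i then u else if m = l then v else 0)
      = (if m = i then f m * u else 0) + (if m = l then f m * v else 0)" for m
    using assms(3) by auto
  then show ?thesis
    using assms(1,2) by (simp add: sum.distrib)
qed

lemma heavy_entry_nonzero:
  assumes distance: "\<And>x. x \<in> messages k \<Longrightarrow> \<exists>i<k. x i \<noteq> 0
      \<Longrightarrow> h + 1 \<le> hamming_weight (systematic_word k h H x)"
    and "j < h" and "i < k"
  shows "H j i \<noteq> 0"
proof
  assume "H j i = 0"
  define x :: "nat \<Rightarrow> 'a" where "x c = (if c = i then 1 else 0)" for c
  have "(\<Sum>m<k. H j m * x m) = H j i"
    using assms(3) by (simp add: x_def if_distrib cong: if_cong)
  then have "card {j} < card {i}"
    using assms \<open>H j i = 0\<close>
    by (intro heavy_checks_less_support[OF distance]) (auto simp: x_def messages_def)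
  then show False
    by simp
qed

lemma heavy_minor_nonzero:
  assumes distance: "\<And>x. x \<in> messages k \<Longrightarrow> \<exists>i<k. x i \<noteq> 0
      \<Longrightarrow> h + 1 \<le> hamming_weight (systematic_word k h H x)"
    and j: "j < h" "j' < h" "j \<noteq> j'"
    and i: "i < k" "i' < k" "i \<noteq> i'"
  shows "H j i * H j' i' \<noteq> H j i' * H j' i"
proof
  assume minor: "H j i * H j' i' = H j i' * H j' i"
  \<comment> \<open>the message annihilated by row j on the columns i, i'\<close>
  define x where "x c = (if c = i then H j i' else if c = i' then - H j i else 0)" for c
  have row: "(\<Sum>m<k. H n m * x m) = H n i * H j i' - H n i' * H j i" for n
    unfolding x_def using i by (simp add: sum_two_points)
  then have rows: "\<forall>n\<in>{j, j'}. (\<Sum>m<k. H n m * x m) = 0"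
    using minor by (simp add: mult.commute)
  have "H j i' \<noteq> 0"
    using heavy_entry_nonzero[OF distance] j i by blast
  then have "x \<in> messages k" "\<exists>m<k. x m \<noteq> 0" "\<forall>m<k. x m \<noteq> 0 \<longrightarrow> m \<in> {i, i'}"
    using i by (auto simp: x_def messages_def)
  then have "card {j, j'} < card {i, i'}"
    using i j by (intro heavy_checks_less_support[OF distance _ _ _ _ _ rows]) auto
  then show False
    using i j by simp
qed

lemma card_ge_of_nonzero_minors:
  fixes a b :: "nat \<Rightarrow> 'a::{finite,field}"
  assumes "\<forall>i<k. a i \<noteq> 0" and "\<forall>i<k. b i \<noteq> 0"
    and "\<forall>i<k. \<forall>l<k. i \<noteq> l \<longrightarrow> a i * b l \<noteq> a l * b i"
  shows "k + 1 \<le> CARD('a)"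
proof -
  have "inj_on (\<lambda>i. b i / a i) {..<k}"
    using assms(1,3) by (intro inj_onI) (auto simp: field_simps)
  moreover have "(\<lambda>i. b i / a i) ` {..<k} \<subseteq> UNIV - {0}"
    using assms(1,2) by auto
  ultimately have "card {..<k} \<le> card (UNIV - {0 :: 'a})"
    by (metis card_image card_mono finite)
  then have "k \<le> CARD('a) - 1"
    by (simp add: card_Diff_subset)
  moreover have "CARD('a) \<ge> 1"
    by (simp add: Suc_leI)
  ultimately show ?thesis
    by linarith
qed

theorem theorem19:
  fixes k r h :: nat
    and H :: "nat \<Rightarrow> nat \<Rightarrow> 'a::{finite,field}"
    and g :: "nat \<Rightarrow> nat"
  assumes "k > 0" and "r > 0" and "h \<ge> 2" and "r dvd (k + h)"
    and "valid_grouping k r h g"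
    and "maximally_recoverable k r h H g"
  shows "CARD('a) \<ge> k + 1"
proof (rule card_ge_of_nonzero_minors)
  note distance = maximally_recoverable_systematic_weight_ge[OF assms(6)]
  show "\<forall>i<k. H 0 i \<noteq> 0" and "\<forall>i<k. H 1 i \<noteq> 0"
    using heavy_entry_nonzero[OF distance] assms(3) by auto
  show "\<forall>i<k. \<forall>l<k. i \<noteq> l \<longrightarrow> H 0 i * H 1 l \<noteq> H 0 l * H 1 i"
    using heavy_minor_nonzero[OF distance, of 0 1] assms(3) by auto
qed

end
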